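(* Let $n>1$, let $D$ be a set, and let $f:\mathcal{S}^n\to D$ be a multidimensional rightward function. Let $\iota':\mathcal{S}^n\to\mathcal{S}^{n-1}$ be defined by $\iota'(\sigma\bullet[\delta])=\delta$ for all $\sigma\in\mathcal{S}^n$, $\delta\in\mathcal{S}^{n-1}$. Then the function product $f\times\iota'$, given by $(f\times\iota')(\sigma)=(f(\sigma),\iota'(\sigma))$ with values in $D\times\mathcal{S}^{n-1}$, is memoryless.
   Context: $\mathit{Sc}$ is a set of scalars. $\mathcal{S}^0=\mathit{Sc}$, $\mathcal{S}^n$ ($n\ge1$) is the set of finite sequences of elements of $\mathcal{S}^{n-1}$; $\bullet$ is concatenation, $[\delta]$ a one-element sequence. A function on sequences is rightward if there is $\oplus'$ with $F(x\bullet[a])=F(x)\oplus' a$ for all $x,a$; leftward if there is $\otimes'$ with $F([a]\bullet x)=a\otimes' F(x)$. $f:\mathcal{S}^n\to D$ ($n>1$) is multidimensional rightward if there exist a family $\mathbb{G}:D\to(\mathcal{S}^{n-1}\to D)$ of rightward (or leftward) functions and $\otimes:D\times D\to D$ such that $f(\sigma\bullet[\delta])=f(\sigma)\otimes\mathbb{G}(f(\sigma))(\delta)$ for all $\sigma,\delta$. A function $F:\mathcal{S}^n\to E$ is memoryless if there exist a rightward or leftward $g:\mathcal{S}^{n-1}\to E$ and $\oplus:E\times E\to E$ with $F(\sigma\bullet[\delta])=F(\sigma)\oplus g(\delta)$ for all $\sigma\in\mathcal{S}^n,\delta\in\mathcal{S}^{n-1}$. *)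

theory Defs
  imports Main
begin

(* Sequences are modelled as HOL lists; concatenation is (@), [d] is the
   one-element sequence.  S^n = 'c list list where 'c stands for S^(n-2)
   (n > 1), so S^(n-1) = 'c list. *)

definition rightward :: "('a list \<Rightarrow> 'e) \<Rightarrow> bool" where
  "rightward F \<longleftrightarrow> (\<exists>opr :: 'e \<Rightarrow> 'a \<Rightarrow> 'e. \<forall>x a. F (x @ [a]) = opr (F x) a)"

definition leftward :: "('a list \<Rightarrow> 'e) \<Rightarrow> bool" where
  "leftward F \<longleftrightarrow> (\<exists>opl :: 'a \<Rightarrow> 'e \<Rightarrow> 'e. \<forall>x a. F ([a] @ x) = opl a (F x))"

definition multidim_rightward :: "('c list list \<Rightarrow> 'd) \<Rightarrow> bool" where
  "multidim_rightward f \<longleftrightarrow>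
     (\<exists>(G :: 'd \<Rightarrow> 'c list \<Rightarrow> 'd) (otimes :: 'd \<Rightarrow> 'd \<Rightarrow> 'd).
        (\<forall>d. rightward (G d) \<or> leftward (G d)) \<and>
        (\<forall>\<sigma> \<delta>. f (\<sigma> @ [\<delta>]) = otimes (f \<sigma>) (G (f \<sigma>) \<delta>)))"

definition memoryless :: "('c list list \<Rightarrow> 'e) \<Rightarrow> bool" where
  "memoryless F \<longleftrightarrow>
     (\<exists>(g :: 'c list \<Rightarrow> 'e) (oplus :: 'e \<Rightarrow> 'e \<Rightarrow> 'e).
        (rightward g \<or> leftward g) \<and>
        (\<forall>\<sigma> \<delta>. F (\<sigma> @ [\<delta>]) = oplus (F \<sigma>) (g \<delta>)))"

end

theory Submission
  imports Defs
begin

text \<open>The last entry \<open>\<delta>\<close> of \<open>\<sigma> @ [\<delta>]\<close> is recorded by the rightward map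
  \<open>\<delta> \<mapsto> (c, \<delta>)\<close>; given it, the pair \<open>(f \<sigma>, \<iota>' \<sigma>)\<close> determines
  \<open>f (\<sigma> @ [\<delta>]) = f \<sigma> \<otimes> \<bbbG> (f \<sigma>) \<delta>\<close> without looking at \<open>\<sigma>\<close> again.\<close>

lemma rightward_Pair_const: "rightward (\<lambda>x. (c, x))"
  unfolding rightward_def by (rule exI[of _ "\<lambda>(c, x) a. (c, x @ [a])"]) simp

theorem proposition5p6:
  fixes f :: "'c list list \<Rightarrow> 'd" and iota' :: "'c list list \<Rightarrow> 'c list"
  assumes "multidim_rightward f"
    and "\<And>\<sigma> \<delta>. iota' (\<sigma> @ [\<delta>]) = \<delta>"
  shows "memoryless (\<lambda>\<sigma>. (f \<sigma>, iota' \<sigma>))"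
proof -
  obtain G :: "'d \<Rightarrow> 'c list \<Rightarrow> 'd" and otimes
    where step: "\<And>\<sigma> \<delta>. f (\<sigma> @ [\<delta>]) = otimes (f \<sigma>) (G (f \<sigma>) \<delta>)"
    using assms(1) unfolding multidim_rightward_def by blast
  let ?g = "\<lambda>\<delta>. (undefined :: 'd, \<delta>)"
  let ?oplus = "\<lambda>(d, _) (_, \<delta>). (otimes d (G d \<delta>), \<delta>)"
  have "(f (\<sigma> @ [\<delta>]), iota' (\<sigma> @ [\<delta>])) = ?oplus (f \<sigma>, iota' \<sigma>) (?g \<delta>)" for \<sigma> \<delta>
    by (simp add: step assms(2))
  then show ?thesis
    unfolding memoryless_def
    by (intro exI[of _ ?g] exI[of _ ?oplus]) (simp add: rightward_Pair_const)
qed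

end
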